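(* Let $a_1,\dots,a_n\in\overline K$ ($n\ge2$) be pairwise distinct, let $A$ be the associated magic matrix and $(\mathcal R,\gamma)$ the associated tree. Then $A=\sum_{T\in\mathcal R}\gamma(T)A(T)$.
   Context: $\overline{K}=\bigcup_{d\ge1}\mathbf{C}[[x^{1/d}]][1/x]$ with valuation $\nu$. $m_{i,j}=\nu(a_i-a_j)$, $m_i=\sum_{j\ne i}m_{i,j}$; $A$ has entries $-m_{i,j}$ off the diagonal and $m_i$ on the diagonal. $T_0=\{1,\dots,n\}$; a "rameau" is $T\subset T_0$ with $|T|\ge2$ such that $m_{i,j}>m_{i,k}=m_{j,k}$ for all $i\ne j$ in $T$ and $k\notin T$; $\mathcal R$ is the set of rameaux. $\alpha(T)=\inf\{m_{i,j}:i\ne j\in T\}$; $\gamma(T_0)=\alpha(T_0)$ and, for $T\neq T_0$, $\gamma(T)=\alpha(T)-\alpha(T')$ with $T'$ the smallest element of $\mathcal R$ strictly containing $T$. For $T\subset T_0$ of cardinality $n(T)\ge2$, $A(T)=(\alpha_{i,j})$ with $\alpha_{i,j}=-1$ if $i\ne j$ and $\{i,j\}\subset T$, $\alpha_{i,i}=n(T)-1$ if $i\in T$, and $0$ otherwise. *)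

theory Defs
  imports Complex_Main
begin

text \<open>The field of formal Puiseux series over the complex numbers,
  bar K = union over d of C[[x^(1/d)]][1/x], modelled as coefficient functions
  rat => complex whose support is contained in (1/d) Z and bounded below.
  Only the additive structure (subtraction) and the valuation are needed.\<close>

definition puiseux :: "(rat \<Rightarrow> complex) set" where
  "puiseux = {f. \<exists>d::nat. d \<ge> 1 \<and> (\<exists>N::int. \<forall>q. f q \<noteq> 0 \<longrightarrow>
      (\<exists>k::int. k \<ge> N \<and> q = of_int k / of_nat d))}"

definition nu :: "(rat \<Rightarrow> complex) \<Rightarrow> rat" where
  "nu f = (LEAST q. f q \<noteq> 0)"

definition mij :: "(nat \<Rightarrow> rat \<Rightarrow> complex) \<Rightarrow> nat \<Rightarrow> nat \<Rightarrow> rat" where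
  "mij a i j = nu (a i - a j)"

definition mi :: "nat \<Rightarrow> (nat \<Rightarrow> rat \<Rightarrow> complex) \<Rightarrow> nat \<Rightarrow> rat" where
  "mi n a i = (\<Sum>j\<in>{1..n} - {i}. mij a i j)"

definition magic :: "nat \<Rightarrow> (nat \<Rightarrow> rat \<Rightarrow> complex) \<Rightarrow> nat \<Rightarrow> nat \<Rightarrow> rat" where
  "magic n a i j = (if i = j then mi n a i else - mij a i j)"

definition rameau :: "nat \<Rightarrow> (nat \<Rightarrow> rat \<Rightarrow> complex) \<Rightarrow> nat set \<Rightarrow> bool" where
  "rameau n a T \<longleftrightarrow> T \<subseteq> {1..n} \<and> card T \<ge> 2 \<and>
     (\<forall>i\<in>T. \<forall>j\<in>T. i \<noteq> j \<longrightarrow> (\<forall>k\<in>{1..n} - T.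
        mij a i j > mij a i k \<and> mij a i k = mij a j k))"

definition rameaux :: "nat \<Rightarrow> (nat \<Rightarrow> rat \<Rightarrow> complex) \<Rightarrow> nat set set" where
  "rameaux n a = {T. rameau n a T}"

definition alpha :: "(nat \<Rightarrow> rat \<Rightarrow> complex) \<Rightarrow> nat set \<Rightarrow> rat" where
  "alpha a T = Min {mij a i j | i j. i \<in> T \<and> j \<in> T \<and> i \<noteq> j}"

definition parent :: "nat \<Rightarrow> (nat \<Rightarrow> rat \<Rightarrow> complex) \<Rightarrow> nat set \<Rightarrow> nat set" where
  "parent n a T = (THE T'. T' \<in> rameaux n a \<and> T \<subset> T' \<and>
      (\<forall>S\<in>rameaux n a. T \<subset> S \<longrightarrow> T' \<subseteq> S))"

definition gamma :: "nat \<Rightarrow> (nat \<Rightarrow> rat \<Rightarrow> complex) \<Rightarrow> nat set \<Rightarrow> rat" where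
  "gamma n a T = (if T = {1..n} then alpha a {1..n}
                  else alpha a T - alpha a (parent n a T))"

definition AT :: "nat set \<Rightarrow> nat \<Rightarrow> nat \<Rightarrow> rat" where
  "AT T i j = (if i \<in> T \<and> j \<in> T then (if i = j then of_nat (card T) - 1 else -1) else 0)"

end

theory Submission
  imports Defs
begin

text \<open>Since the valuation is ultrametric, for distinct \<open>i, j\<close> the points \<open>k\<close> with
  \<open>m\<^sub>i\<^sub>k \<ge> m\<^sub>i\<^sub>j\<close> (together with \<open>i\<close>) form a rameau \<open>B\<close> with \<open>\<alpha>(B) = m\<^sub>i\<^sub>j\<close>, and
  the rameaux containing both \<open>i\<close> and \<open>j\<close> are exactly those containing \<open>B\<close>.
  Rameaux form a laminar family, so those containing \<open>B\<close> form the chain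
  \<open>B \<subset> B' \<subset> \<dots> \<subset> T\<^sub>0\<close> of successive parents, along which the \<open>\<gamma>\<close>-values
  telescope to \<open>\<alpha>(B)\<close>. This gives the off-diagonal entries; the diagonal ones
  follow because the rows of \<open>A\<close> and of every \<open>A(T)\<close> sum to zero.\<close>

lemma puiseux_diff:
  assumes "f \<in> puiseux" "g \<in> puiseux"
  shows "f - g \<in> puiseux"
proof -
  obtain d1 N1 where d1: "d1 \<ge> (1::nat)"
    and f: "\<forall>q. f q \<noteq> 0 \<longrightarrow> (\<exists>k::int. k \<ge> N1 \<and> q = of_int k / of_nat d1)"
    using assms(1) unfolding puiseux_def by blast
  obtain d2 N2 where d2: "d2 \<ge> (1::nat)"
    and g: "\<forall>q. g q \<noteq> 0 \<longrightarrow> (\<exists>k::int. k \<ge> N2 \<and> q = of_int k / of_nat d2)"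
    using assms(2) unfolding puiseux_def by blast
  define N where "N = min (N1 * int d2) (N2 * int d1)"
  have "\<exists>k::int. k \<ge> N \<and> q = of_int k / of_nat (d1 * d2)" if "(f - g) q \<noteq> 0" for q
  proof -
    from that consider "f q \<noteq> 0" | "g q \<noteq> 0" by fastforce
    then show ?thesis
    proof cases
      case 1
      then obtain k where k: "k \<ge> N1" "q = of_int k / of_nat d1" using f by blast
      then have "N \<le> k * int d2" unfolding N_def by (simp add: min.coboundedI1 mult_right_mono)
      with k d1 d2 show ?thesis by (intro exI[of _ "k * int d2"]) (auto simp: field_simps)
    next
      case 2
      then obtain k where k: "k \<ge> N2" "q = of_int k / of_nat d2" using g by blast
      then have "N \<le> k * int d1" unfolding N_def by (simp add: min.coboundedI2 mult_right_mono)
      with k d1 d2 show ?thesis by (intro exI[of _ "k * int d1"]) (auto simp: field_simps)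
    qed
  qed
  moreover have "d1 * d2 \<ge> 1" using d1 d2 by simp
  ultimately show ?thesis unfolding puiseux_def by blast
qed

lemma puiseux_support_has_least:
  assumes "f \<in> puiseux" "f q1 \<noteq> 0"
  shows "\<exists>q0. f q0 \<noteq> 0 \<and> (\<forall>q. f q \<noteq> 0 \<longrightarrow> q0 \<le> q)"
proof -
  obtain d N where d: "d \<ge> (1::nat)"
    and f: "\<forall>q. f q \<noteq> 0 \<longrightarrow> (\<exists>k::int. k \<ge> N \<and> q = of_int k / of_nat d)"
    using assms(1) unfolding puiseux_def by blast
  obtain k1 where q1: "q1 = of_int k1 / of_nat d" using f assms(2) by blast
  define S where "S = {q. f q \<noteq> 0 \<and> q \<le> q1}"
  have "S \<subseteq> (\<lambda>k. of_int k / of_nat d) ` {N..k1}"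
  proof
    fix q assume "q \<in> S"
    then obtain k where "k \<ge> N" "q = of_int k / of_nat d" "q \<le> q1"
      using f unfolding S_def by blast
    with d q1 show "q \<in> (\<lambda>k. of_int k / of_nat d) ` {N..k1}"
      by (auto simp: divide_le_cancel)
  qed
  then have "finite S" by (rule finite_subset) simp
  moreover have "q1 \<in> S" using assms(2) unfolding S_def by simp
  ultimately have "Min S \<in> S" "\<forall>q\<in>S. Min S \<le> q" by (auto intro: Min_in)
  then show ?thesis unfolding S_def by (metis (mono_tags) mem_Collect_eq order.trans linear)
qed

lemma nu_puiseux:
  assumes "f \<in> puiseux" "f q1 \<noteq> 0"
  shows "f (nu f) \<noteq> 0" and "\<And>q. f q \<noteq> 0 \<Longrightarrow> nu f \<le> q"
proof -
  from assms(2) obtain q0 where q0: "f q0 \<noteq> 0" "\<forall>q. f q \<noteq> 0 \<longrightarrow> q0 \<le> q"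
    using puiseux_support_has_least assms(1) by blast
  then have "nu f = q0" unfolding nu_def by (intro Least_equality) auto
  with q0 show "f (nu f) \<noteq> 0" "\<And>q. f q \<noteq> 0 \<Longrightarrow> nu f \<le> q" by auto
qed

lemma nu_diff_commute: "nu (f - g) = nu (g - f)"
proof -
  have "(\<lambda>q. (f - g) q \<noteq> 0) = (\<lambda>q. (g - f) q \<noteq> 0)"
    by (auto simp: fun_diff_def)
  then show ?thesis unfolding nu_def by simp
qed

lemma nu_diff_ultrametric:
  assumes "f \<in> puiseux" "g \<in> puiseux" "h \<in> puiseux" "f \<noteq> g" "g \<noteq> h" "f \<noteq> h"
  shows "min (nu (f - g)) (nu (g - h)) \<le> nu (f - h)"
proof -
  have nonzero: "\<exists>q. (u - v) q \<noteq> 0" if "u \<noteq> v" for u v :: "rat \<Rightarrow> complex"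
    using that by (auto simp: fun_diff_def fun_eq_iff)
  define q where "q = nu (f - h)"
  have "(f - h) q \<noteq> 0"
    unfolding q_def using nonzero[OF assms(6)] puiseux_diff[OF assms(1,3)] nu_puiseux(1) by blast
  then consider "(f - g) q \<noteq> 0" | "(g - h) q \<noteq> 0"
    by (fastforce simp: fun_diff_def)
  then show ?thesis
  proof cases
    case 1
    then have "nu (f - g) \<le> q" by (rule nu_puiseux(2)[OF puiseux_diff[OF assms(1,2)] 1])
    then show ?thesis unfolding q_def by linarith
  next
    case 2
    then have "nu (g - h) \<le> q" by (rule nu_puiseux(2)[OF puiseux_diff[OF assms(2,3)] 2])
    then show ?thesis unfolding q_def by linarith
  qed
qed

lemma mij_commute: "mij a i j = mij a j i"
  unfolding mij_def by (rule nu_diff_commute)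

lemma AT_row_sum:
  assumes "T \<subseteq> {1..n}"
  shows "AT T i i = - (\<Sum>j\<in>{1..n} - {i}. AT T i j)"
proof (cases "i \<in> T")
  case True
  have "finite T" using finite_subset[OF assms] by simp
  have "T \<inter> ({1..n} - {i}) = T - {i}" using assms by auto
  then have "(\<Sum>j\<in>{1..n} - {i}. AT T i j) = - of_nat (card (T - {i}))"
    using True by (simp add: AT_def sum.If_cases Int_commute)
  also have "\<dots> = - (of_nat (card T) - 1)"
  proof -
    have "card T \<ge> 1" using True \<open>finite T\<close> by (metis Suc_leI card_gt_0_iff empty_iff One_nat_def)
    then show ?thesis using True \<open>finite T\<close> by (simp add: card_Diff_singleton of_nat_diff)
  qed
  finally show ?thesis using True by (simp add: AT_def)
qed (simp add: AT_def)

lemma rameau_subset: "rameau n a T \<Longrightarrow> T \<subseteq> {1..n}"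
  unfolding rameau_def by blast

lemma rameau_atLeastAtMost: "2 \<le> n \<Longrightarrow> rameau n a {1..n}"
  unfolding rameau_def by simp

lemma rameau_finite: "rameau n a T \<Longrightarrow> finite T"
  using finite_subset[OF rameau_subset] by blast

lemma finite_rameaux: "finite (rameaux n a)"
proof -
  have "rameaux n a \<subseteq> Pow {1..n}" unfolding rameaux_def using rameau_subset by blast
  then show ?thesis by (rule finite_subset) simp
qed

lemma rameau_outside_less:
  assumes "rameau n a T" "i \<in> T" "j \<in> T" "i \<noteq> j" "k \<in> {1..n} - T"
  shows "mij a i k < mij a i j"
  using assms unfolding rameau_def by blast

lemma rameaux_laminar:
  assumes T: "rameau n a T" and S: "rameau n a S" and x: "x \<in> T" "x \<in> S"
  shows "T \<subseteq> S \<or> S \<subseteq> T"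
proof (rule ccontr)
  assume "\<not> ?thesis"
  then obtain t s where t: "t \<in> T" "t \<notin> S" and s: "s \<in> S" "s \<notin> T" by blast
  have "t \<in> {1..n}" "s \<in> {1..n}" using t s rameau_subset T S by blast+
  then have "mij a x s < mij a x t" and "mij a x t < mij a x s"
    using rameau_outside_less[OF T x(1) t(1)] rameau_outside_less[OF S x(2) s(1)] t s x by auto
  then show False by simp
qed

lemma least_rameau_above_exists:
  assumes "2 \<le> n" and T: "rameau n a T" and "T \<noteq> {1..n}"
  shows "\<exists>P. rameau n a P \<and> T \<subset> P \<and> (\<forall>S. rameau n a S \<and> T \<subset> S \<longrightarrow> P \<subseteq> S)"
proof -
  have "card T \<ge> 2" using T unfolding rameau_def by blast
  then obtain x where x: "x \<in> T" by fastforce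
  define C where "C S \<longleftrightarrow> rameau n a S \<and> T \<subset> S" for S
  have "C {1..n}" using assms rameau_atLeastAtMost rameau_subset unfolding C_def by blast
  then obtain P where P: "C P" and least: "\<forall>S. C S \<longrightarrow> card P \<le> card S"
    using ex_has_least_nat[of C "{1..n}" card] by blast
  have "P \<subseteq> S" if S: "C S" for S
  proof -
    have "finite P" using P rameau_finite unfolding C_def by blast
    have "P \<subseteq> S \<or> S \<subseteq> P"
      using S P x rameaux_laminar[of n a S P x] unfolding C_def by blast
    then show ?thesis
      using card_seteq[OF \<open>finite P\<close> _] least S by blast
  qed
  with P show ?thesis unfolding C_def by blast
qed

lemma parent_eq:
  assumes P: "rameau n a P" "T \<subset> P" and least: "\<forall>S. rameau n a S \<and> T \<subset> S \<longrightarrow> P \<subseteq> S"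
  shows "parent n a T = P"
  unfolding parent_def
proof (rule the_equality)
  show "P \<in> rameaux n a \<and> T \<subset> P \<and> (\<forall>S\<in>rameaux n a. T \<subset> S \<longrightarrow> P \<subseteq> S)"
    using assms unfolding rameaux_def by simp
next
  fix Q assume Q: "Q \<in> rameaux n a \<and> T \<subset> Q \<and> (\<forall>S\<in>rameaux n a. T \<subset> S \<longrightarrow> Q \<subseteq> S)"
  then have "P \<subseteq> Q" using least unfolding rameaux_def by simp
  moreover have "Q \<subseteq> P" using Q P unfolding rameaux_def by simp
  ultimately show "Q = P" by (rule subset_antisym[rotated])
qed

lemma parent:
  assumes "2 \<le> n" "rameau n a T" "T \<noteq> {1..n}"
  shows "rameau n a (parent n a T)" "T \<subset> parent n a T"
    "\<And>S. rameau n a S \<Longrightarrow> T \<subset> S \<Longrightarrow> parent n a T \<subseteq> S"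
proof -
  obtain P where P: "rameau n a P" "T \<subset> P" "\<forall>S. rameau n a S \<and> T \<subset> S \<longrightarrow> P \<subseteq> S"
    using least_rameau_above_exists[OF assms] by blast
  then show "rameau n a (parent n a T)" "T \<subset> parent n a T"
    "\<And>S. rameau n a S \<Longrightarrow> T \<subset> S \<Longrightarrow> parent n a T \<subseteq> S"
    using parent_eq[OF P] by simp_all
qed

lemma sum_gamma_rameaux_above:
  assumes "2 \<le> n" "rameau n a T"
  shows "(\<Sum>S\<in>{S\<in>rameaux n a. T \<subseteq> S}. gamma n a S) = alpha a T"
  using assms(2)
proof (induction "n - card T" arbitrary: T rule: less_induct)
  case less
  show ?case
  proof (cases "T = {1..n}")
    case True
    then have "{S\<in>rameaux n a. T \<subseteq> S} = {T}"
      using less.prems rameau_subset unfolding rameaux_def by blast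
    then show ?thesis using True by (simp add: gamma_def)
  next
    case False
    define P where "P = parent n a T"
    have P: "rameau n a P" "T \<subset> P" "\<And>S. rameau n a S \<Longrightarrow> T \<subset> S \<Longrightarrow> P \<subseteq> S"
      using parent[OF assms(1) less.prems False] unfolding P_def by blast+
    have above_T: "{S\<in>rameaux n a. T \<subseteq> S} = insert T {S\<in>rameaux n a. P \<subseteq> S}"
      using P less.prems unfolding rameaux_def by blast
    have "finite P" using rameau_finite[OF P(1)] .
    have "card T < card P" using psubset_card_mono[OF \<open>finite P\<close> P(2)] .
    moreover have "card P \<le> n" using card_mono[OF _ rameau_subset[OF P(1)]] by simp
    ultimately have "n - card P < n - card T" by linarith
    then have "(\<Sum>S\<in>{S\<in>rameaux n a. P \<subseteq> S}. gamma n a S) = alpha a P"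
      using less.hyps P(1) by blast
    moreover have "T \<notin> {S\<in>rameaux n a. P \<subseteq> S}" using P(2) by blast
    ultimately show ?thesis
      unfolding above_T using finite_rameaux False by (simp add: gamma_def P_def)
  qed
qed

locale ultrametric_points =
  fixes n :: nat and a :: "nat \<Rightarrow> rat \<Rightarrow> complex"
  assumes mij_ultrametric: "\<lbrakk>i \<in> {1..n}; j \<in> {1..n}; k \<in> {1..n}; i \<noteq> j; j \<noteq> k; i \<noteq> k\<rbrakk>
    \<Longrightarrow> min (mij a i j) (mij a j k) \<le> mij a i k"
begin

definition cluster :: "nat \<Rightarrow> nat \<Rightarrow> nat set" where
  "cluster i j = insert i {k\<in>{1..n}. k \<noteq> i \<and> mij a i j \<le> mij a i k}"

context
  fixes i j assumes i: "i \<in> {1..n}" and j: "j \<in> {1..n}" and "i \<noteq> j"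
begin

lemma cluster_subset: "cluster i j \<subseteq> {1..n}"
  using i unfolding cluster_def by blast

lemma mem_cluster: "i \<in> cluster i j" "j \<in> cluster i j"
  using j \<open>i \<noteq> j\<close> unfolding cluster_def by auto

lemma cluster_outside_less: "k \<in> {1..n} - cluster i j \<Longrightarrow> mij a i k < mij a i j"
  unfolding cluster_def by auto

lemma cluster_outside_eq:
  assumes u: "u \<in> cluster i j" and k: "k \<in> {1..n} - cluster i j"
  shows "mij a u k = mij a i k"
proof (cases "u = i")
  case False
  have "u \<in> {1..n}" "k \<noteq> i" "k \<noteq> u" using u k cluster_subset mem_cluster by blast+
  moreover have "mij a i k < mij a i u"
    using cluster_outside_less[OF k] u False unfolding cluster_def by auto
  ultimately have "min (mij a i u) (mij a u k) \<le> mij a i k" "min (mij a u i) (mij a i k) \<le> mij a u k"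
    using mij_ultrametric i k False by auto
  then show ?thesis using \<open>mij a i k < mij a i u\<close> mij_commute[of a u i] by (auto simp: min_def split: if_splits)
qed simp

lemma cluster_inside:
  assumes u: "u \<in> cluster i j" and v: "v \<in> cluster i j" and "u \<noteq> v"
  shows "mij a i j \<le> mij a u v"
proof -
  have close: "mij a i j \<le> mij a i w" if "w \<in> cluster i j" "w \<noteq> i" for w
    using that unfolding cluster_def by auto
  consider "u = i" | "v = i" | "u \<noteq> i" "v \<noteq> i" by blast
  then show ?thesis
  proof cases
    case 1 then show ?thesis using close v \<open>u \<noteq> v\<close> by simp
  next
    case 2 then show ?thesis using close u \<open>u \<noteq> v\<close> mij_commute[of a u i] by simp
  next
    case 3
    have "u \<in> {1..n}" "v \<in> {1..n}" using u v cluster_subset by blast+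
    then have "min (mij a u i) (mij a i v) \<le> mij a u v"
      using mij_ultrametric i 3 \<open>u \<noteq> v\<close> by auto
    then show ?thesis using close[OF u 3(1)] close[OF v 3(2)] mij_commute[of a u i] by linarith
  qed
qed

lemma rameau_cluster: "rameau n a (cluster i j)"
proof -
  have "finite (cluster i j)" using finite_subset[OF cluster_subset] by simp
  then have "card (cluster i j) \<ge> 2"
    using mem_cluster \<open>i \<noteq> j\<close> by (metis card_2_iff card_mono empty_subsetI insert_subset)
  moreover have "mij a u k < mij a u v \<and> mij a u k = mij a v k"
    if "u \<in> cluster i j" "v \<in> cluster i j" "u \<noteq> v" "k \<in> {1..n} - cluster i j" for u v k
    using that cluster_outside_eq cluster_outside_less cluster_inside[of u v] by fastforce
  ultimately show ?thesis unfolding rameau_def using cluster_subset by blast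
qed

lemma alpha_cluster: "alpha a (cluster i j) = mij a i j"
  unfolding alpha_def
proof (rule Min_eqI)
  have "finite (cluster i j)" using finite_subset[OF cluster_subset] by simp
  then have "finite ((\<lambda>(u, v). mij a u v) ` (cluster i j \<times> cluster i j))" by simp
  then show "finite {mij a u v |u v. u \<in> cluster i j \<and> v \<in> cluster i j \<and> u \<noteq> v}"
    by (rule rev_finite_subset) auto
qed (use mem_cluster cluster_inside \<open>i \<noteq> j\<close> in auto)

lemma pair_in_rameau_iff:
  assumes T: "rameau n a T"
  shows "i \<in> T \<and> j \<in> T \<longleftrightarrow> cluster i j \<subseteq> T"
proof
  assume ij: "i \<in> T \<and> j \<in> T"
  show "cluster i j \<subseteq> T"
  proof
    fix k assume k: "k \<in> cluster i j"
    show "k \<in> T"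
    proof (rule ccontr)
      assume "k \<notin> T"
      then have "mij a i k < mij a i j"
        using rameau_outside_less[OF T _ _ \<open>i \<noteq> j\<close>] ij k cluster_subset by blast
      moreover have "k \<noteq> i" using \<open>k \<notin> T\<close> ij by blast
      ultimately show False using k unfolding cluster_def by auto
    qed
  qed
qed (use mem_cluster in blast)

end

lemma sum_gamma_rameaux_containing:
  assumes "2 \<le> n" "i \<in> {1..n}" "j \<in> {1..n}" "i \<noteq> j"
  shows "(\<Sum>T\<in>rameaux n a. if i \<in> T \<and> j \<in> T then gamma n a T else 0) = mij a i j"
proof -
  have "(\<Sum>T\<in>rameaux n a. if i \<in> T \<and> j \<in> T then gamma n a T else 0)
      = (\<Sum>T\<in>rameaux n a. if cluster i j \<subseteq> T then gamma n a T else 0)"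
    using pair_in_rameau_iff[OF assms(2-4)] unfolding rameaux_def by (intro sum.cong) auto
  also have "\<dots> = (\<Sum>T\<in>{T\<in>rameaux n a. cluster i j \<subseteq> T}. gamma n a T)"
    using finite_rameaux by (simp add: sum.inter_filter)
  also have "\<dots> = alpha a (cluster i j)"
    by (rule sum_gamma_rameaux_above[OF assms(1) rameau_cluster[OF assms(2-4)]])
  also have "\<dots> = mij a i j" by (rule alpha_cluster[OF assms(2-4)])
  finally show ?thesis .
qed

lemma sum_gamma_AT_offdiag:
  assumes "2 \<le> n" "i \<in> {1..n}" "j \<in> {1..n}" "i \<noteq> j"
  shows "(\<Sum>T\<in>rameaux n a. gamma n a T * AT T i j) = - mij a i j"
proof -
  have "(\<Sum>T\<in>rameaux n a. gamma n a T * AT T i j)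
      = - (\<Sum>T\<in>rameaux n a. if i \<in> T \<and> j \<in> T then gamma n a T else 0)"
    unfolding sum_negf[symmetric] using assms(4) by (intro sum.cong) (auto simp: AT_def)
  then show ?thesis using sum_gamma_rameaux_containing[OF assms] by simp
qed

lemma magic_eq_sum_gamma_AT:
  assumes "2 \<le> n" "i \<in> {1..n}" "j \<in> {1..n}"
  shows "magic n a i j = (\<Sum>T\<in>rameaux n a. gamma n a T * AT T i j)"
proof (cases "i = j")
  case False
  then show ?thesis using sum_gamma_AT_offdiag assms by (simp add: magic_def)
next
  case True
  have "(\<Sum>T\<in>rameaux n a. gamma n a T * AT T i i)
      = (\<Sum>T\<in>rameaux n a. \<Sum>k\<in>{1..n} - {i}. - (gamma n a T * AT T i k))"
  proof (rule sum.cong)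
    fix T assume "T \<in> rameaux n a"
    then have "AT T i i = - (\<Sum>k\<in>{1..n} - {i}. AT T i k)"
      unfolding rameaux_def by (intro AT_row_sum rameau_subset) simp
    then show "gamma n a T * AT T i i = (\<Sum>k\<in>{1..n} - {i}. - (gamma n a T * AT T i k))"
      by (simp add: sum_distrib_left sum_negf)
  qed simp
  also have "\<dots> = (\<Sum>k\<in>{1..n} - {i}. - (\<Sum>T\<in>rameaux n a. gamma n a T * AT T i k))"
    by (subst sum.swap) (simp add: sum_negf)
  also have "\<dots> = (\<Sum>k\<in>{1..n} - {i}. mij a i k)"
    using sum_gamma_AT_offdiag assms by (intro sum.cong) auto
  finally show ?thesis using True by (simp add: magic_def mi_def)
qed

end

theorem mainTheorem5:
  fixes n :: nat and a :: "nat \<Rightarrow> rat \<Rightarrow> complex"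
  assumes "n \<ge> 2"
    and "\<forall>i\<in>{1..n}. a i \<in> puiseux"
    and "\<forall>i\<in>{1..n}. \<forall>j\<in>{1..n}. i \<noteq> j \<longrightarrow> a i \<noteq> a j"
  shows "\<forall>i\<in>{1..n}. \<forall>j\<in>{1..n}.
           magic n a i j = (\<Sum>T\<in>rameaux n a. gamma n a T * AT T i j)"
proof -
  interpret ultrametric_points n a
    using assms(2,3) by unfold_locales (simp add: mij_def nu_diff_ultrametric)
  show ?thesis using magic_eq_sum_gamma_AT assms(1) by blast
qed

end
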